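(* Let $\mathbf{A}$ be a 3-dimensional cyclic Leibniz algebra over $\mathbb{C}$. Then $\mathbf{A}$ is isomorphic to a Leibniz algebra with basis $\{a,a^2,a^3\}$, where $aa=a^2$, $aa^2=a^3$, $a^2v=a^3v=0$ for all $v$, and $aa^3$ is given by one and only one of the following: (1) $aa^3=0$; (2) $aa^3=a^3$; (3) $aa^3=a^2+\alpha_3a^3$ with $\alpha_3\in\mathbb{C}/\sim$, where $\alpha\sim\alpha'$ iff $\alpha'=\pm\alpha$. Here "one and only one" means that algebras from different cases are non-isomorphic, and in case (3) the algebras with parameters $\alpha_3,\alpha_3'$ are isomorphic iff $\alpha_3'=\pm\alpha_3$.
   Context: A (left) Leibniz algebra is a vector space with a bilinear product such that $x(yz)=(xy)z+y(xz)$ for all $x,y,z$. A cyclic Leibniz algebra is a Leibniz algebra generated by a single element. For an element $x$ set $x^1=x$ and $x^{j+1}=x\,x^j$. *)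

theory Defs
  imports Complex_Main "HOL-Library.Product_Plus"
begin

definition leibniz_algebra ::
  "(complex \<Rightarrow> 'a::ab_group_add \<Rightarrow> 'a) \<Rightarrow> ('a \<Rightarrow> 'a \<Rightarrow> 'a) \<Rightarrow> bool" where
  "leibniz_algebra scale mult \<longleftrightarrow>
     vector_space scale \<and>
     (\<forall>x y z. mult (x + y) z = mult x z + mult y z) \<and>
     (\<forall>x y z. mult x (y + z) = mult x y + mult x z) \<and>
     (\<forall>c x y. mult (scale c x) y = scale c (mult x y)) \<and>
     (\<forall>c x y. mult x (scale c y) = scale c (mult x y)) \<and>
     (\<forall>x y z. mult x (mult y z) = mult (mult x y) z + mult y (mult x z))"

definition gen_subalgebra ::
  "(complex \<Rightarrow> 'a::ab_group_add \<Rightarrow> 'a) \<Rightarrow> ('a \<Rightarrow> 'a \<Rightarrow> 'a) \<Rightarrow> 'a \<Rightarrow> 'a set" where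
  "gen_subalgebra scale mult x =
     \<Inter>{S. module.subspace scale S \<and> x \<in> S \<and> (\<forall>u\<in>S. \<forall>v\<in>S. mult u v \<in> S)}"

definition cyclic_algebra ::
  "(complex \<Rightarrow> 'a::ab_group_add \<Rightarrow> 'a) \<Rightarrow> ('a \<Rightarrow> 'a \<Rightarrow> 'a) \<Rightarrow> bool" where
  "cyclic_algebra scale mult \<longleftrightarrow> (\<exists>x. gen_subalgebra scale mult x = UNIV)"

definition alg_iso ::
  "(complex \<Rightarrow> 'a::plus \<Rightarrow> 'a) \<Rightarrow> ('a \<Rightarrow> 'a \<Rightarrow> 'a) \<Rightarrow>
   (complex \<Rightarrow> 'b::plus \<Rightarrow> 'b) \<Rightarrow> ('b \<Rightarrow> 'b \<Rightarrow> 'b) \<Rightarrow> ('a \<Rightarrow> 'b) \<Rightarrow> bool" where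
  "alg_iso s1 m1 s2 m2 f \<longleftrightarrow> bij f \<and>
     (\<forall>x y. f (x + y) = f x + f y) \<and>
     (\<forall>c x. f (s1 c x) = s2 c (f x)) \<and>
     (\<forall>x y. f (m1 x y) = m2 (f x) (f y))"

definition alg_isomorphic ::
  "(complex \<Rightarrow> 'a::plus \<Rightarrow> 'a) \<Rightarrow> ('a \<Rightarrow> 'a \<Rightarrow> 'a) \<Rightarrow>
   (complex \<Rightarrow> 'b::plus \<Rightarrow> 'b) \<Rightarrow> ('b \<Rightarrow> 'b \<Rightarrow> 'b) \<Rightarrow> bool" where
  "alg_isomorphic s1 m1 s2 m2 \<longleftrightarrow> (\<exists>f. alg_iso s1 m1 s2 m2 f)"

text \<open>Model algebras on C^3, coordinates (x1,x2,x3) standing for x1 a + x2 a^2 + x3 a^3.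
  Products: a a = a^2, a a^2 = a^3, a a^3 = p a^2 + q a^3, a^2 v = a^3 v = 0.\<close>
definition cscale3 :: "complex \<Rightarrow> complex \<times> complex \<times> complex \<Rightarrow> complex \<times> complex \<times> complex" where
  "cscale3 c v = (c * fst v, c * fst (snd v), c * snd (snd v))"

definition model_mult :: "complex \<Rightarrow> complex \<Rightarrow>
    complex \<times> complex \<times> complex \<Rightarrow> complex \<times> complex \<times> complex \<Rightarrow> complex \<times> complex \<times> complex" where
  "model_mult p q u v =
     (0, fst u * (fst v + p * snd (snd v)), fst u * (fst (snd v) + q * snd (snd v)))"

definition model_params :: "(complex \<times> complex) set" where
  "model_params = {(0, 0), (0, 1)} \<union> {(1, \<alpha>) | \<alpha>. True}"

end

theory Submission
  imports Defs
begin

text \<open>If \<open>x\<close> generates \<open>A\<close>, the Leibniz identity \<open>(x y) v = x (y v) - y (x v)\<close> shows that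
  all powers \<open>x\<^sup>k\<close> with \<open>k \<ge> 2\<close> annihilate \<open>A\<close> from the left. Hence the span of the powers of
  \<open>x\<close> is a subalgebra, so it is all of \<open>A\<close>, and in dimension 3 the powers \<open>x, x\<^sup>2, x\<^sup>3\<close> form a
  basis with \<open>x x\<^sup>3 = \<beta> x\<^sup>2 + \<gamma> x\<^sup>3\<close>; there is no \<open>x\<close>-component because \<open>x\<^sup>4 x = 0\<close>.
  Replacing the generator \<open>a\<close> of a model algebra by \<open>t a\<close> turns \<open>(\<beta>, \<gamma>)\<close> into
  \<open>(t\<^sup>2 \<beta>, t \<gamma>)\<close>, and conversely every isomorphism of model algebras is of this kind, with
  \<open>t\<close> the first coordinate of the image of \<open>a\<close>. The listed normal forms are exactly the orbit
  representatives of this action of the nonzero scalars.\<close>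

lemma alg_iso_inv:
  assumes "alg_iso s1 m1 s2 m2 f"
  shows "alg_iso s2 m2 s1 m1 (inv f)"
proof -
  have bij: "bij f" and add: "\<And>x y. f (x + y) = f x + f y"
    and scale: "\<And>c x. f (s1 c x) = s2 c (f x)" and mult: "\<And>x y. f (m1 x y) = m2 (f x) (f y)"
    using assms unfolding alg_iso_def by auto
  have f_inv: "f (inv f y) = y" for y using bij by (simp add: bij_is_surj surj_f_inv_f)
  have inv_f: "inv f (f x) = x" for x using bij by (simp add: bij_is_inj)
  show ?thesis
    unfolding alg_iso_def
  proof (intro conjI allI bij_imp_bij_inv bij)
    fix x y c
    show "inv f (x + y) = inv f x + inv f y" by (metis add f_inv inv_f)
    show "inv f (s2 c x) = s1 c (inv f x)" by (metis scale f_inv inv_f)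
    show "inv f (m2 x y) = m1 (inv f x) (inv f y)" by (metis mult f_inv inv_f)
  qed
qed

lemma alg_iso_comp:
  assumes "alg_iso s1 m1 s2 m2 f" "alg_iso s2 m2 s3 m3 g"
  shows "alg_iso s1 m1 s3 m3 (g \<circ> f)"
  using assms unfolding alg_iso_def by (auto intro: bij_comp)

lemma alg_isomorphic_trans:
  "alg_isomorphic s1 m1 s2 m2 \<Longrightarrow> alg_isomorphic s2 m2 s3 m3 \<Longrightarrow> alg_isomorphic s1 m1 s3 m3"
  unfolding alg_isomorphic_def by (meson alg_iso_comp)

definition lincomb3 :: "('a \<Rightarrow> 'b \<Rightarrow> 'b) \<Rightarrow> 'b \<Rightarrow> 'b \<Rightarrow> 'b \<Rightarrow> 'a \<times> 'a \<times> 'a \<Rightarrow> 'b::plus"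
  where "lincomb3 scale u1 u2 u3 c = scale (fst c) u1 + scale (fst (snd c)) u2 + scale (snd (snd c)) u3"

context vector_space
begin

lemma independent_card_le_dim_UNIV:
  assumes "0 < dim (UNIV :: 'b set)" "independent S"
  shows "card S \<le> dim (UNIV :: 'b set)"
proof -
  obtain B where B: "independent B" "UNIV \<subseteq> span B" "card B = dim (UNIV :: 'b set)"
    using basis_exists[of UNIV] by blast
  then have "finite B" using assms(1) card_ge_0_finite by fastforce
  then show ?thesis using independent_span_bound[OF _ assms(2), of B] B by auto
qed

lemma lincomb3_eq_0D:
  assumes "independent {u1, u2, u3}" "distinct [u1, u2, u3]" "lincomb3 scale u1 u2 u3 c = 0"
  shows "c = 0"
proof -
  obtain c1 c2 c3 where c: "c = (c1, c2, c3)" by (cases c)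
  define u where "u v = (if v = u1 then c1 else if v = u2 then c2 else c3)" for v
  have distinct: "u1 \<noteq> u2" "u1 \<noteq> u3" "u2 \<noteq> u3" using assms(2) by auto
  then have "(\<Sum>v\<in>{u1, u2, u3}. u v *s v) = lincomb3 scale u1 u2 u3 c"
    by (simp add: u_def c lincomb3_def add.assoc)
  then have "\<forall>v\<in>{u1, u2, u3}. u v = 0"
    using assms(1,3) dependent_finite[of "{u1, u2, u3}"] by auto
  then show ?thesis using distinct by (auto simp: c u_def zero_prod_def)
qed

lemma bij_lincomb3:
  assumes "independent {u1, u2, u3}" "distinct [u1, u2, u3]" "span {u1, u2, u3} = UNIV"
  shows "bij (lincomb3 scale u1 u2 u3)"
proof (rule bijI)
  show "inj (lincomb3 scale u1 u2 u3)"
  proof (rule injI)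
    fix c d assume "lincomb3 scale u1 u2 u3 c = lincomb3 scale u1 u2 u3 d"
    then have "lincomb3 scale u1 u2 u3 (c - d) = 0"
      by (simp add: lincomb3_def algebra_simps)
    then have "c - d = 0" by (rule lincomb3_eq_0D[OF assms(1,2)])
    then show "c = d" by simp
  qed
  show "surj (lincomb3 scale u1 u2 u3)"
    unfolding surj_def
  proof
    fix v
    have "v \<in> span {u1, u2, u3}" using assms(3) by simp
    then obtain k3 k2 k1 where "v - k3 *s u3 - k2 *s u2 - k1 *s u1 \<in> span {}"
      by (metis insert_commute span_breakdown_eq)
    then have "v = lincomb3 scale u1 u2 u3 (k1, k2, k3)" by (simp add: lincomb3_def algebra_simps)
    then show "\<exists>c. v = lincomb3 scale u1 u2 u3 c" ..
  qed
qed

end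

locale leibniz = vector_space scale
  for scale :: "complex \<Rightarrow> 'a::ab_group_add \<Rightarrow> 'a" (infixr "*s" 75) +
  fixes mult :: "'a \<Rightarrow> 'a \<Rightarrow> 'a"
  assumes mult_add_left: "mult (x + y) z = mult x z + mult y z"
    and mult_add_right: "mult x (y + z) = mult x y + mult x z"
    and mult_scale_left: "mult (c *s x) y = c *s mult x y"
    and mult_scale_right: "mult x (c *s y) = c *s mult x y"
    and leibniz_identity: "mult x (mult y z) = mult (mult x y) z + mult y (mult x z)"

lemma leibniz_algebra_imp_leibniz: "leibniz_algebra scale mult \<Longrightarrow> leibniz scale mult"
  unfolding leibniz_algebra_def leibniz_def leibniz_axioms_def by blast

context leibniz
begin

lemma mult_zero_left [simp]: "mult 0 y = 0"
  using mult_add_left[of 0 0 y] by simp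

lemma mult_zero_right [simp]: "mult y 0 = 0"
  using mult_add_right[of y 0 0] by simp

text \<open>Shifted indexing: \<open>lpow x k\<close> is the paper's \<open>x\<^sup>k\<^sup>+\<^sup>1\<close>.\<close>
fun lpow :: "'a \<Rightarrow> nat \<Rightarrow> 'a" where
  "lpow x 0 = x"
| "lpow x (Suc k) = mult x (lpow x k)"

text \<open>By the Leibniz identity \<open>(x y) v = x (y v) - y (x v)\<close>, which vanishes for \<open>y = x\<close>
  and then, inductively, for every higher power \<open>y\<close> of \<open>x\<close>.\<close>
lemma mult_lpow_Suc_left: "mult (lpow x (Suc k)) v = 0"
proof (induction k arbitrary: v)
  case 0
  show ?case using leibniz_identity[of x x v] by simp
next
  case (Suc k)
  have "mult (lpow x (Suc (Suc k))) v
      = mult x (mult (lpow x (Suc k)) v) - mult (lpow x (Suc k)) (mult x v)"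
    using leibniz_identity[of x "lpow x (Suc k)" v] by (simp add: algebra_simps)
  then show ?case using Suc by simp
qed

lemma mult_left_in_span:
  assumes "\<forall>t\<in>T. mult x t \<in> span T" "v \<in> span T"
  shows "mult x v \<in> span T"
  using assms(2)
proof (induction rule: span_induct_alt)
  case base
  show ?case by (simp add: span_zero)
next
  case (step c y w)
  then show ?case using assms(1) by (simp add: mult_add_right mult_scale_right span_add span_scale)
qed

lemma gen_subalgebra_subset_span:
  assumes "x \<in> span T" "\<forall>t\<in>T. mult x t \<in> span T"
  shows "gen_subalgebra scale mult x \<subseteq> span T"
proof -
  let ?P = "span (range (lpow x))"
  have lpow_in_P: "mult x t \<in> ?P" if "t \<in> range (lpow x)" for t
    using that by (auto intro: span_base simp flip: lpow.simps(2))
  have closed: "mult u v \<in> ?P" if "u \<in> ?P" "v \<in> ?P" for u v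
    using that(1)
  proof (induction rule: span_induct_alt)
    case base
    show ?case by (simp add: span_zero)
  next
    case (step c y w)
    obtain k where "y = lpow x k" using step(1) by blast
    then have "mult y v \<in> ?P"
      using mult_left_in_span[OF _ that(2)] lpow_in_P mult_lpow_Suc_left span_zero
      by (cases k) auto
    then show ?case using step by (simp add: mult_add_left mult_scale_left span_add span_scale)
  qed
  have "x \<in> ?P" by (metis lpow.simps(1) rangeI span_base)
  then have "gen_subalgebra scale mult x \<subseteq> ?P"
    unfolding gen_subalgebra_def by (intro Inter_lower) (auto simp: closed)
  moreover have "lpow x k \<in> span T" for k
    by (induction k) (auto simp: assms mult_left_in_span)
  then have "?P \<subseteq> span T" by (intro span_minimal subspace_span) auto
  ultimately show ?thesis by blast
qed

lemma span_lpow_eq_UNIV: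
  assumes "gen_subalgebra scale mult x = UNIV" "lpow x k \<in> span (lpow x ` {..<k})"
  shows "span (lpow x ` {..<k}) = UNIV"
proof -
  have "x \<in> span (lpow x ` {..<k})"
  proof (cases k)
    case 0
    then show ?thesis using assms(2) by simp
  next
    case (Suc m)
    then have "x \<in> lpow x ` {..<k}" by (intro rev_image_eqI[of 0]) auto
    then show ?thesis by (rule span_base)
  qed
  moreover have "mult x t \<in> span (lpow x ` {..<k})" if t: "t \<in> lpow x ` {..<k}" for t
  proof -
    obtain j where j: "j < k" "t = lpow x j" using t by blast
    show ?thesis
    proof (cases "Suc j = k")
      case True
      with j have "mult x t = lpow x k" by auto
      then show ?thesis using assms(2) by simp
    next
      case False
      with j have "mult x t \<in> lpow x ` {..<k}" by (intro rev_image_eqI[of "Suc j"]) auto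
      then show ?thesis by (rule span_base)
    qed
  qed
  ultimately show ?thesis
    using gen_subalgebra_subset_span assms(1) by blast
qed

lemma independent_lpow:
  assumes "gen_subalgebra scale mult x = UNIV" "k \<le> dim (UNIV :: 'a set)"
  shows "independent (lpow x ` {..<k}) \<and> inj_on (lpow x) {..<k}"
  using assms(2)
proof (induction k)
  case 0
  show ?case by (simp add: independent_empty)
next
  case (Suc k)
  then have IH: "independent (lpow x ` {..<k})" "inj_on (lpow x) {..<k}" by simp_all
  have "lpow x k \<notin> span (lpow x ` {..<k})"
  proof
    assume "lpow x k \<in> span (lpow x ` {..<k})"
    then have "span (lpow x ` {..<k}) = UNIV" by (rule span_lpow_eq_UNIV[OF assms(1)])
    then have "dim (UNIV :: 'a set) \<le> card (lpow x ` {..<k})" by (intro dim_le_card) auto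
    also have "\<dots> \<le> k" using card_image_le[of "{..<k}" "lpow x"] by simp
    finally show False using Suc.prems by simp
  qed
  then show ?case
    using IH by (auto simp: lessThan_Suc independent_insertI span_base)
qed

lemma lpow_basis:
  assumes "gen_subalgebra scale mult x = UNIV" "dim (UNIV :: 'a set) = n" "0 < n"
  shows "independent (lpow x ` {..<n}) \<and> inj_on (lpow x) {..<n} \<and> span (lpow x ` {..<n}) = UNIV"
proof -
  have indep: "independent (lpow x ` {..<n})" and inj: "inj_on (lpow x) {..<n}"
    using independent_lpow[OF assms(1)] assms(2) by simp_all
  have "lpow x n \<in> span (lpow x ` {..<n})"
  proof (rule ccontr)
    assume "lpow x n \<notin> span (lpow x ` {..<n})"
    then have "independent (lpow x ` {..<Suc n})" "inj_on (lpow x) {..<Suc n}"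
      using indep inj by (auto simp: lessThan_Suc independent_insertI span_base)
    then have "Suc n \<le> dim (UNIV :: 'a set)"
      using independent_card_le_dim_UNIV[of "lpow x ` {..<Suc n}"] assms(2,3)
      by (simp add: card_image)
    then show False using assms(2) by simp
  qed
  then show ?thesis using indep inj span_lpow_eq_UNIV[OF assms(1)] by blast
qed

lemma alg_isomorphic_model_of_basis:
  assumes "independent {u1, u2, u3}" "distinct [u1, u2, u3]" "span {u1, u2, u3} = UNIV"
    and "mult u1 u1 = u2" "mult u1 u2 = u3" "mult u1 u3 = p *s u2 + q *s u3"
    and "\<And>v. mult u2 v = 0" "\<And>v. mult u3 v = 0"
  shows "alg_isomorphic scale mult cscale3 (model_mult p q)"
proof -
  let ?g = "lincomb3 scale u1 u2 u3"
  have "alg_iso cscale3 (model_mult p q) scale mult ?g"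
    unfolding alg_iso_def
  proof (intro conjI allI)
    show "bij ?g" by (rule bij_lincomb3[OF assms(1-3)])
    fix v w :: "complex \<times> complex \<times> complex" and c
    show "?g (v + w) = ?g v + ?g w"
      by (simp add: lincomb3_def algebra_simps)
    show "?g (cscale3 c v) = c *s ?g v"
      by (simp add: lincomb3_def cscale3_def scale_right_distrib)
    have "mult (?g v) (?g w) = fst v *s mult u1 (?g w)"
      by (simp add: lincomb3_def mult_add_left mult_scale_left assms(7,8))
    also have "\<dots> = ?g (model_mult p q v w)"
      by (simp add: lincomb3_def model_mult_def mult_add_right mult_scale_right assms(4-6)
          distrib_left scale_left_distrib scale_right_distrib mult_ac add_ac)
    finally show "?g (model_mult p q v w) = mult (?g v) (?g w)" ..
  qed
  then show ?thesis unfolding alg_isomorphic_def by (blast intro: alg_iso_inv)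
qed

theorem cyclic_dim3_isomorphic_model:
  assumes "gen_subalgebra scale mult x = UNIV" "dim (UNIV :: 'a set) = 3"
  shows "\<exists>\<beta> \<gamma>. alg_isomorphic scale mult cscale3 (model_mult \<beta> \<gamma>)"
proof -
  define x2 x3 where "x2 = mult x x" and "x3 = mult x x2"
  have "lpow x ` {..<3} = {x, x2, x3}"
    by (auto simp: numeral_3_eq_3 lessThan_Suc x2_def x3_def)
  then have basis: "independent {x, x2, x3}" "span {x, x2, x3} = UNIV"
    using lpow_basis[OF assms] by simp_all
  have "inj_on (lpow x) {..<3}" using lpow_basis[OF assms] by simp
  then have "lpow x i \<noteq> lpow x j" if "i < 3" "j < 3" "i \<noteq> j" for i j
    using that by (simp add: inj_on_eq_iff)
  from this[of 0 "Suc 0"] this[of 0 "Suc (Suc 0)"] this[of "Suc 0" "Suc (Suc 0)"]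
  have distinct: "distinct [x, x2, x3]" by (simp add: x2_def x3_def)
  obtain c where "mult x x3 = lincomb3 scale x x2 x3 c"
    using surjD[OF bij_is_surj[OF bij_lincomb3[OF basis(1) distinct basis(2)]]] by blast
  moreover obtain k1 \<beta> \<gamma> where "c = (k1, \<beta>, \<gamma>)" by (cases c)
  ultimately have x4: "mult x x3 = k1 *s x + \<beta> *s x2 + \<gamma> *s x3" by (simp add: lincomb3_def)
  have annihilate: "mult x2 v = 0" "mult x3 v = 0" "mult (mult x x3) v = 0" for v
    using mult_lpow_Suc_left[of x 0 v] mult_lpow_Suc_left[of x "Suc 0" v]
      mult_lpow_Suc_left[of x "Suc (Suc 0)" v]
    by (simp_all add: x2_def x3_def)
  \<comment> \<open>\<open>x\<^sup>4\<close> annihilates \<open>x\<close>, which kills the \<open>x\<close>-component of \<open>x\<^sup>4\<close>.\<close>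
  have "k1 *s x2 = mult (mult x x3) x"
    unfolding x4 by (simp add: mult_add_left mult_scale_left annihilate(1,2) x2_def[symmetric])
  then have "k1 *s x2 = 0" by (simp add: annihilate(3))
  moreover have "x2 \<noteq> 0"
    using basis(1) dependent_zero[of "{x, x2, x3}"] by auto
  ultimately have "mult x x3 = \<beta> *s x2 + \<gamma> *s x3" using x4 by simp
  from alg_isomorphic_model_of_basis[OF basis(1) distinct basis(2) x2_def[symmetric]
      x3_def[symmetric] this annihilate(1,2)]
  show ?thesis by blast
qed

end

lemma model_rescale_iso:
  assumes "t \<noteq> 0"
  shows "alg_iso cscale3 (model_mult (t\<^sup>2 * p) (t * q)) cscale3 (model_mult p q)
           (\<lambda>(x1, x2, x3). (t * x1, t\<^sup>2 * x2, t ^ 3 * x3))"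
  unfolding alg_iso_def
proof (intro conjI allI)
  let ?f = "\<lambda>(x1, x2, x3). (t * x1, t\<^sup>2 * x2, t ^ 3 * x3)"
  let ?g = "\<lambda>(x1, x2, x3). (x1 / t, x2 / t\<^sup>2, x3 / t ^ 3)"
  show "bij ?f"
    by (rule o_bij[of ?g]) (auto simp: fun_eq_iff assms)
qed (auto simp: cscale3_def model_mult_def algebra_simps power2_eq_square power3_eq_cube)

lemma model_iso_scaling:
  assumes "alg_iso cscale3 (model_mult p q) cscale3 (model_mult p' q') f"
  shows "\<exists>t. t \<noteq> 0 \<and> p = t\<^sup>2 * p' \<and> q = t * q'"
proof -
  have "inj f" and add: "\<And>x y. f (x + y) = f x + f y"
    and scale: "\<And>c x. f (cscale3 c x) = cscale3 c (f x)"
    and mult: "\<And>x y. f (model_mult p q x y) = model_mult p' q' (f x) (f y)"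
    using assms unfolding alg_iso_def by (auto simp: bij_is_inj)
  have f0: "f 0 = 0" using add[of 0 0] by simp
  define t where "t = fst (f (1, 0, 0))"
  define F2 where "F2 = f (0, 1, 0)"
  define F3 where "F3 = f (0, 0, 1)"
  have f_lin: "f (0, a, b) = cscale3 a F2 + cscale3 b F3" for a b
  proof -
    have "(0, a, b) = cscale3 a (0, 1, 0) + cscale3 b (0, 0, 1)" by (simp add: cscale3_def)
    then show ?thesis unfolding F2_def F3_def by (simp add: add scale)
  qed
  have F2: "F2 = model_mult p' q' (f (1, 0, 0)) (f (1, 0, 0))"
    using mult[of "(1, 0, 0)" "(1, 0, 0)"] by (simp add: F2_def model_mult_def)
  have F3: "F3 = model_mult p' q' (f (1, 0, 0)) F2"
    using mult[of "(1, 0, 0)" "(0, 1, 0)"] by (simp add: F2_def F3_def model_mult_def)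
  have "model_mult p' q' (f (1, 0, 0)) F3 = f (0, p, q)"
    using mult[of "(1, 0, 0)" "(0, 0, 1)"] by (simp add: F3_def model_mult_def)
  \<comment> \<open>On vectors with vanishing first coordinate, left multiplication by f(1,0,0) acts as
    t times the companion matrix of X^2 - q' X - p'; Cayley-Hamilton gives the left-hand side.\<close>
  moreover have "model_mult p' q' (f (1, 0, 0)) F3 = cscale3 (t\<^sup>2 * p') F2 + cscale3 (t * q') F3"
    unfolding F3 F2 t_def
    by (simp add: model_mult_def cscale3_def power2_eq_square algebra_simps)
  ultimately have "f (0, p - t\<^sup>2 * p', q - t * q') = f 0"
    by (simp add: f_lin f0 cscale3_def zero_prod_def algebra_simps)
  then have "(0::complex, p - t\<^sup>2 * p', q - t * q') = 0"
    by (rule injD[OF \<open>inj f\<close>])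
  then have scaling: "p = t\<^sup>2 * p'" "q = t * q'"
    by (simp_all add: zero_prod_def)
  have "t \<noteq> 0"
  proof
    assume "t = 0"
    then have "F2 = 0" using F2 by (simp add: t_def model_mult_def zero_prod_def)
    then have "f (0, 1, 0) = f 0" by (simp add: F2_def f0)
    then have "(0::complex, 1::complex, 0::complex) = 0" by (rule injD[OF \<open>inj f\<close>])
    then show False by (simp add: zero_prod_def)
  qed
  with scaling show ?thesis by blast
qed

lemma model_isomorphic_iff:
  "alg_isomorphic cscale3 (model_mult p q) cscale3 (model_mult p' q')
     \<longleftrightarrow> (\<exists>t. t \<noteq> 0 \<and> p = t\<^sup>2 * p' \<and> q = t * q')"
  unfolding alg_isomorphic_def using model_iso_scaling model_rescale_iso by blast

lemma model_params_representative:
  "\<exists>(p, q) \<in> model_params. \<exists>t. t \<noteq> 0 \<and> \<beta> = t\<^sup>2 * p \<and> \<gamma> = t * q"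
proof (cases "\<beta> = 0")
  case False
  then have "csqrt \<beta> \<noteq> 0 \<and> \<beta> = (csqrt \<beta>)\<^sup>2 * 1 \<and> \<gamma> = csqrt \<beta> * (\<gamma> / csqrt \<beta>)"
    by simp
  moreover have "(1, \<gamma> / csqrt \<beta>) \<in> model_params"
    by (simp add: model_params_def)
  ultimately show ?thesis by blast
next
  case True
  show ?thesis
  proof (cases "\<gamma> = 0")
    case False
    with \<open>\<beta> = 0\<close> show ?thesis
      by (intro bexI[of _ "(0, 1)"]) (auto simp: model_params_def)
  next
    case True
    with \<open>\<beta> = 0\<close> show ?thesis
      by (intro bexI[of _ "(0, 0)"]) (auto simp: model_params_def intro: exI[of _ 1])
  qed
qed

lemma model_params_scaling_iff:
  assumes "(p, q) \<in> model_params" "(p', q') \<in> model_params"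
  shows "(\<exists>t. t \<noteq> 0 \<and> p = t\<^sup>2 * p' \<and> q = t * q') \<longleftrightarrow> p' = p \<and> (q' = q \<or> p = 1 \<and> q' = - q)"
proof
  assume "\<exists>t. t \<noteq> 0 \<and> p = t\<^sup>2 * p' \<and> q = t * q'"
  then obtain t where t: "t \<noteq> 0" "p = t\<^sup>2 * p'" "q = t * q'" by blast
  show "p' = p \<and> (q' = q \<or> p = 1 \<and> q' = - q)"
  proof (cases "p = 1")
    case True
    with assms t have "p' = 1" by (auto simp: model_params_def)
    with True t have "t = 1 \<or> t = - 1" by (simp add: power2_eq_1_iff)
    with True t \<open>p' = 1\<close> show ?thesis by auto
  next
    case False
    with assms t show ?thesis by (auto simp: model_params_def)
  qed
next
  assume "p' = p \<and> (q' = q \<or> p = 1 \<and> q' = - q)"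
  then have "p = 1\<^sup>2 * p' \<and> q = 1 * q' \<or> p = (- 1)\<^sup>2 * p' \<and> q = - 1 * q'"
    by auto
  then show "\<exists>t. t \<noteq> 0 \<and> p = t\<^sup>2 * p' \<and> q = t * q'"
    by (metis neg_equal_0_iff_equal zero_neq_one)
qed

theorem corollary4p1:
  fixes scale :: "complex \<Rightarrow> 'a::ab_group_add \<Rightarrow> 'a"
    and mult :: "'a \<Rightarrow> 'a \<Rightarrow> 'a"
  assumes "leibniz_algebra scale mult"
    and "vector_space.dim scale (UNIV :: 'a set) = 3"
    and "cyclic_algebra scale mult"
  shows "(\<exists>(p, q) \<in> model_params.
            alg_isomorphic scale mult cscale3 (model_mult p q))
    \<and> (\<forall>(p, q) \<in> model_params. \<forall>(p', q') \<in> model_params.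
         alg_isomorphic cscale3 (model_mult p q) cscale3 (model_mult p' q')
           \<longleftrightarrow> (p' = p \<and> (q' = q \<or> (p = 1 \<and> q' = - q))))"
proof
  interpret leibniz scale mult
    using assms(1) by (rule leibniz_algebra_imp_leibniz)
  obtain x where "gen_subalgebra scale mult x = UNIV"
    using assms(3) unfolding cyclic_algebra_def by blast
  then obtain \<beta> \<gamma> where iso: "alg_isomorphic scale mult cscale3 (model_mult \<beta> \<gamma>)"
    using cyclic_dim3_isomorphic_model assms(2) by blast
  obtain p q where pq: "(p, q) \<in> model_params" and "\<exists>t. t \<noteq> 0 \<and> \<beta> = t\<^sup>2 * p \<and> \<gamma> = t * q"
    using model_params_representative[of \<beta> \<gamma>] by auto
  then have "alg_isomorphic cscale3 (model_mult \<beta> \<gamma>) cscale3 (model_mult p q)"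
    by (simp only: model_isomorphic_iff)
  with iso pq show "\<exists>(p, q) \<in> model_params. alg_isomorphic scale mult cscale3 (model_mult p q)"
    by (blast intro: alg_isomorphic_trans)
next
  show "\<forall>(p, q) \<in> model_params. \<forall>(p', q') \<in> model_params.
         alg_isomorphic cscale3 (model_mult p q) cscale3 (model_mult p' q')
           \<longleftrightarrow> (p' = p \<and> (q' = q \<or> (p = 1 \<and> q' = - q)))"
    by (clarsimp simp: model_isomorphic_iff model_params_scaling_iff)
qed

end
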